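(* Let $r$ be an $\mathfrak s$-matrix on a pre-Lie algebra $(\mathfrak g,\cdot_{\mathfrak g})$. Then the map $\varrho:\mathfrak g^*\to\mathfrak{gl}(\mathfrak g)$, $\varrho(\alpha)(x)=[r^\sharp(\alpha),x]_{\mathfrak g}+r^\sharp(L^*_x\alpha)$, is a representation of the Lie algebra $(\mathfrak g^*,[\cdot,\cdot]_r)$ on $\mathfrak g$.
   Context: A pre-Lie algebra is a finite-dimensional vector space $\mathfrak g$ over a field of characteristic $0$ with product $\cdot$ satisfying $(x\cdot y)\cdot z-x\cdot(y\cdot z)=(y\cdot x)\cdot z-y\cdot(x\cdot z)$; $[x,y]_{\mathfrak g}=x\cdot y-y\cdot x$. Define $\langle L^*_x\alpha,y\rangle=-\langle\alpha,x\cdot y\rangle$. For $r\in\mathrm{Sym}^2(\mathfrak g)$, $\langle r^\sharp(\alpha),\beta\rangle=r(\alpha,\beta)$. For $r=\sum_ia_i\otimes b_i$, $[r,r]=-\sum_{i,j}a_i\cdot a_j\otimes b_i\otimes b_j+\sum_{i,j}a_i\otimes b_i\cdot a_j\otimes b_j+\sum_{i,j}a_i\otimes a_j\otimes[b_i,b_j]_{\mathfrak g}$; $r$ is an $\mathfrak s$-matrix if $r\in\mathrm{Sym}^2(\mathfrak g)$ and $[r,r]=0$. $[\alpha,\beta]_r=L^*_{r^\sharp(\alpha)}\beta-L^*_{r^\sharp(\beta)}\alpha$ (this is a Lie bracket on $\mathfrak g^*$ when $r$ is an $\mathfrak s$-matrix). *)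

theory Defs
  imports Main
begin

text \<open>Coordinate model: the finite-dimensional vector space g is k^n, realised as
  functions 'n \<Rightarrow> 'k for a finite index type 'n; the dual g* is realised in the same
  way via the standard pairing. Tensors in g\<otimes>g and g\<otimes>g\<otimes>g are coefficient arrays.\<close>

definition vadd :: "('n \<Rightarrow> 'k::field) \<Rightarrow> ('n \<Rightarrow> 'k) \<Rightarrow> ('n \<Rightarrow> 'k)" where
  "vadd x y = (\<lambda>i. x i + y i)"

definition vsub :: "('n \<Rightarrow> 'k::field) \<Rightarrow> ('n \<Rightarrow> 'k) \<Rightarrow> ('n \<Rightarrow> 'k)" where
  "vsub x y = (\<lambda>i. x i - y i)"

definition vsmul :: "'k::field \<Rightarrow> ('n \<Rightarrow> 'k) \<Rightarrow> ('n \<Rightarrow> 'k)" where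
  "vsmul c x = (\<lambda>i. c * x i)"

definition bvec :: "'n \<Rightarrow> ('n \<Rightarrow> 'k::field)" where
  "bvec i = (\<lambda>j. if j = i then 1 else 0)"

definition pair :: "('n::finite \<Rightarrow> 'k::field) \<Rightarrow> ('n \<Rightarrow> 'k) \<Rightarrow> 'k" where
  "pair \<alpha> x = (\<Sum>i\<in>UNIV. \<alpha> i * x i)"

definition lin_map :: "(('n \<Rightarrow> 'k::field) \<Rightarrow> ('m \<Rightarrow> 'k)) \<Rightarrow> bool" where
  "lin_map f \<longleftrightarrow> (\<forall>x y. f (vadd x y) = vadd (f x) (f y)) \<and> (\<forall>c x. f (vsmul c x) = vsmul c (f x))"

definition bilin_map :: "(('n \<Rightarrow> 'k::field) \<Rightarrow> ('n \<Rightarrow> 'k) \<Rightarrow> ('n \<Rightarrow> 'k)) \<Rightarrow> bool" where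
  "bilin_map m \<longleftrightarrow> (\<forall>x. lin_map (m x)) \<and> (\<forall>y. lin_map (\<lambda>x. m x y))"

definition pre_lie :: "(('n \<Rightarrow> 'k::field) \<Rightarrow> ('n \<Rightarrow> 'k) \<Rightarrow> ('n \<Rightarrow> 'k)) \<Rightarrow> bool" where
  "pre_lie m \<longleftrightarrow> bilin_map m \<and>
     (\<forall>x y z. vsub (m (m x y) z) (m x (m y z)) = vsub (m (m y x) z) (m y (m x z)))"

definition comm :: "(('n \<Rightarrow> 'k::field) \<Rightarrow> ('n \<Rightarrow> 'k) \<Rightarrow> ('n \<Rightarrow> 'k)) \<Rightarrow> ('n \<Rightarrow> 'k) \<Rightarrow> ('n \<Rightarrow> 'k) \<Rightarrow> ('n \<Rightarrow> 'k)" where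
  "comm m x y = vsub (m x y) (m y x)"

text \<open>L^*_x alpha, determined by <L^*_x alpha, y> = - <alpha, x.y>\<close>
definition Lstar :: "(('n::finite \<Rightarrow> 'k::field) \<Rightarrow> ('n \<Rightarrow> 'k) \<Rightarrow> ('n \<Rightarrow> 'k)) \<Rightarrow> ('n \<Rightarrow> 'k) \<Rightarrow> ('n \<Rightarrow> 'k) \<Rightarrow> ('n \<Rightarrow> 'k)" where
  "Lstar m x \<alpha> = (\<lambda>j. - pair \<alpha> (m x (bvec j)))"

text \<open>r = sum_{i,j} r i j e_i \<otimes> e_j; r(alpha,beta) = sum r i j alpha_i beta_j;
  r^sharp determined by <r^sharp alpha, beta> = r(alpha, beta)\<close>
definition sharp :: "('n::finite \<Rightarrow> 'n \<Rightarrow> 'k::field) \<Rightarrow> ('n \<Rightarrow> 'k) \<Rightarrow> ('n \<Rightarrow> 'k)" where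
  "sharp r \<alpha> = (\<lambda>j. \<Sum>i\<in>UNIV. r i j * \<alpha> i)"

definition sym2 :: "('n \<Rightarrow> 'n \<Rightarrow> 'k) \<Rightarrow> bool" where
  "sym2 r \<longleftrightarrow> (\<forall>i j. r i j = r j i)"

text \<open>[r,r] for r = sum_{(i,j)} (r i j e_i) \<otimes> e_j, as coefficient array of g\<otimes>g\<otimes>g\<close>
definition rr :: "(('n::finite \<Rightarrow> 'k::field) \<Rightarrow> ('n \<Rightarrow> 'k) \<Rightarrow> ('n \<Rightarrow> 'k)) \<Rightarrow> ('n \<Rightarrow> 'n \<Rightarrow> 'k)
    \<Rightarrow> 'n \<Rightarrow> 'n \<Rightarrow> 'n \<Rightarrow> 'k" where
  "rr m r p q s =
     - (\<Sum>i\<in>UNIV. \<Sum>j\<in>UNIV. \<Sum>k\<in>UNIV. \<Sum>l\<in>UNIV.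
          m (vsmul (r i j) (bvec i)) (vsmul (r k l) (bvec k)) p * bvec j q * bvec l s)
     + (\<Sum>i\<in>UNIV. \<Sum>j\<in>UNIV. \<Sum>k\<in>UNIV. \<Sum>l\<in>UNIV.
          vsmul (r i j) (bvec i) p * m (bvec j) (vsmul (r k l) (bvec k)) q * bvec l s)
     + (\<Sum>i\<in>UNIV. \<Sum>j\<in>UNIV. \<Sum>k\<in>UNIV. \<Sum>l\<in>UNIV.
          vsmul (r i j) (bvec i) p * vsmul (r k l) (bvec k) q * comm m (bvec j) (bvec l) s)"

definition s_matrix :: "(('n::finite \<Rightarrow> 'k::field) \<Rightarrow> ('n \<Rightarrow> 'k) \<Rightarrow> ('n \<Rightarrow> 'k)) \<Rightarrow> ('n \<Rightarrow> 'n \<Rightarrow> 'k) \<Rightarrow> bool" where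
  "s_matrix m r \<longleftrightarrow> sym2 r \<and> (\<forall>p q s. rr m r p q s = 0)"

definition r_bracket :: "(('n::finite \<Rightarrow> 'k::field) \<Rightarrow> ('n \<Rightarrow> 'k) \<Rightarrow> ('n \<Rightarrow> 'k)) \<Rightarrow> ('n \<Rightarrow> 'n \<Rightarrow> 'k)
    \<Rightarrow> ('n \<Rightarrow> 'k) \<Rightarrow> ('n \<Rightarrow> 'k) \<Rightarrow> ('n \<Rightarrow> 'k)" where
  "r_bracket m r \<alpha> \<beta> = vsub (Lstar m (sharp r \<alpha>) \<beta>) (Lstar m (sharp r \<beta>) \<alpha>)"

definition rho :: "(('n::finite \<Rightarrow> 'k::field) \<Rightarrow> ('n \<Rightarrow> 'k) \<Rightarrow> ('n \<Rightarrow> 'k)) \<Rightarrow> ('n \<Rightarrow> 'n \<Rightarrow> 'k)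
    \<Rightarrow> ('n \<Rightarrow> 'k) \<Rightarrow> ('n \<Rightarrow> 'k) \<Rightarrow> ('n \<Rightarrow> 'k)" where
  "rho m r \<alpha> x = vadd (comm m (sharp r \<alpha>) x) (sharp r (Lstar m x \<alpha>))"

definition lie_rep :: "(('n \<Rightarrow> 'k::field) \<Rightarrow> ('n \<Rightarrow> 'k) \<Rightarrow> ('n \<Rightarrow> 'k))
    \<Rightarrow> (('n \<Rightarrow> 'k) \<Rightarrow> ('m \<Rightarrow> 'k) \<Rightarrow> ('m \<Rightarrow> 'k)) \<Rightarrow> bool" where
  "lie_rep br \<rho> \<longleftrightarrow>
     (\<forall>\<alpha>. lin_map (\<rho> \<alpha>)) \<and>
     (\<forall>\<alpha> \<beta>. \<rho> (vadd \<alpha> \<beta>) = (\<lambda>x. vadd (\<rho> \<alpha> x) (\<rho> \<beta> x))) \<and>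
     (\<forall>c \<alpha>. \<rho> (vsmul c \<alpha>) = (\<lambda>x. vsmul c (\<rho> \<alpha> x))) \<and>
     (\<forall>\<alpha> \<beta> x. \<rho> (br \<alpha> \<beta>) x = vsub (\<rho> \<alpha> (\<rho> \<beta> x)) (\<rho> \<beta> (\<rho> \<alpha> x)))"

end

theory Submission
  imports Defs "HOL-Library.Function_Algebras"
begin

text \<open>The whole argument rests on one identity: pairing the equation [r,r] = 0 with
  \<alpha> \<otimes> \<beta> \<otimes> \<gamma> shows that r\<sharp> is a homomorphism of brackets,
  r\<sharp>[\<alpha>,\<beta>]_r = [r\<sharp>\<alpha>, r\<sharp>\<beta>]_g.
  The pre-Lie identity makes [-,-]_g a Lie bracket and x \<mapsto> L*_x a representation of it on
  the dual. Expanding \<rho>(\<alpha>)\<rho>(\<beta>) - \<rho>(\<beta>)\<rho>(\<alpha>) and using these three facts, the terms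
  regroup into \<rho>([\<alpha>,\<beta>]_r); linearity of \<rho> is immediate.\<close>

lemma vadd_eq_plus: "vadd x y = x + y"
  by (simp add: vadd_def fun_eq_iff)

lemma vsub_eq_minus: "vsub x y = x - y"
  by (simp add: vsub_def fun_eq_iff)

lemma vsmul_add_right: "vsmul c (x + y) = vsmul c x + vsmul c y"
  by (simp add: vsmul_def fun_eq_iff algebra_simps)

lemma bvec_apply: "bvec j i = (if i = j then 1 else 0)"
  by (simp add: bvec_def)

lemma if_zero_times: "(if P then a else 0) * (b::'k::field) = (if P then a * b else 0)"
  by simp

lemma times_if_zero: "(b::'k::field) * (if P then a else 0) = (if P then b * a else 0)"
  by simp

lemma sum_if_zero: "(\<Sum>k\<in>A. if P then f k else 0) = (if P then (\<Sum>k\<in>A. f k) else 0)"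
  by simp

lemmas delta_simps = bvec_apply if_zero_times times_if_zero sum_if_zero sum.delta sum.delta'

lemma vec_expansion: "(y::'n::finite \<Rightarrow> 'k::field) = (\<lambda>i. \<Sum>j\<in>UNIV. y j * bvec j i)"
  by (simp add: delta_simps fun_eq_iff)

lemma lin_map_add: "lin_map f \<Longrightarrow> f (x + y) = f x + f y"
  by (metis lin_map_def vadd_eq_plus)

lemma lin_map_smul: "lin_map f \<Longrightarrow> f (vsmul c x) = vsmul c (f x)"
  by (simp add: lin_map_def)

lemma lin_map_uminus: "lin_map f \<Longrightarrow> f (- x) = - f (x::'n \<Rightarrow> 'k::field)"
proof -
  assume f: "lin_map f"
  have "- x = vsmul (-1) x" by (simp add: vsmul_def fun_eq_iff)
  then have "f (- x) = vsmul (-1) (f x)" using lin_map_smul[OF f] by metis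
  then show ?thesis by (simp add: vsmul_def fun_eq_iff)
qed

lemma lin_map_zero: "lin_map f \<Longrightarrow> f 0 = (0::'m \<Rightarrow> 'k::field)"
proof -
  assume f: "lin_map f"
  have "(0::'n \<Rightarrow> 'k) = vsmul 0 0" by (simp add: vsmul_def fun_eq_iff)
  then have "f 0 = vsmul 0 (f 0)" using lin_map_smul[OF f] by metis
  then show ?thesis by (simp add: vsmul_def fun_eq_iff)
qed

lemma lin_map_diff: "lin_map f \<Longrightarrow> f (x - y) = f x - f (y::'n \<Rightarrow> 'k::field)"
  using lin_map_add[of f x "- y"] lin_map_uminus[of f y] by simp

lemma lin_map_sum:
  assumes f: "lin_map f" and "finite S"
  shows "f (\<lambda>i. \<Sum>j\<in>S. c j * u j i) = (\<lambda>i. \<Sum>j\<in>S. c j * f (u j) i)"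
  using \<open>finite S\<close>
proof (induction S rule: finite_induct)
  case empty
  then show ?case using lin_map_zero[OF f] by (simp add: zero_fun_def)
next
  case (insert a S)
  have "(\<lambda>i. \<Sum>j\<in>insert a S. c j * u j i) = vsmul (c a) (u a) + (\<lambda>i. \<Sum>j\<in>S. c j * u j i)"
    using insert by (simp add: vsmul_def fun_eq_iff)
  then have "f (\<lambda>i. \<Sum>j\<in>insert a S. c j * u j i)
      = vsmul (c a) (f (u a)) + (\<lambda>i. \<Sum>j\<in>S. c j * f (u j) i)"
    using insert by (simp add: lin_map_add[OF f] lin_map_smul[OF f])
  then show ?case
    using insert by (simp add: vsmul_def fun_eq_iff)
qed

lemma lin_map_expansion:
  "lin_map f \<Longrightarrow> f (y::'n::finite \<Rightarrow> 'k::field) i = (\<Sum>j\<in>UNIV. y j * f (bvec j) i)"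
proof -
  assume f: "lin_map f"
  have "f y = f (\<lambda>i. \<Sum>j\<in>UNIV. y j * bvec j i)"
    by (rule arg_cong[OF vec_expansion])
  also have "\<dots> = (\<lambda>i. \<Sum>j\<in>UNIV. y j * f (bvec j) i)"
    by (rule lin_map_sum[OF f]) simp
  finally show ?thesis by simp
qed

lemma bilinear_expansion:
  fixes F :: "('n::finite \<Rightarrow> 'k::field) \<Rightarrow> ('n \<Rightarrow> 'k) \<Rightarrow> ('n \<Rightarrow> 'k)"
  assumes "\<And>w. lin_map (\<lambda>x. F x w)" and "\<And>x. lin_map (F x)"
  shows "F u w p = (\<Sum>i\<in>UNIV. \<Sum>k\<in>UNIV. u i * w k * F (bvec i) (bvec k) p)"
proof -
  have "F u w p = (\<Sum>i\<in>UNIV. u i * F (bvec i) w p)"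
    by (rule lin_map_expansion[OF assms(1)])
  also have "\<dots> = (\<Sum>i\<in>UNIV. u i * (\<Sum>k\<in>UNIV. w k * F (bvec i) (bvec k) p))"
    using lin_map_expansion[OF assms(2), where y = w] by simp
  finally show ?thesis by (simp add: sum_distrib_left mult.assoc)
qed

lemma pair_bvec_left [simp]: "pair (bvec j) v = v j"
  by (simp add: pair_def delta_simps)

lemma pair_diff_left: "pair (a - b) v = pair a v - pair b v"
  by (simp add: pair_def algebra_simps sum_subtractf)

lemma pair_diff_right: "pair v (a - b) = pair v a - pair v b"
  by (simp add: pair_def algebra_simps sum_subtractf)

lemma pair_sum_right: "pair v (\<lambda>i. \<Sum>p\<in>UNIV. c p * u p i) = (\<Sum>p\<in>UNIV. c p * pair v (u p))"
  unfolding pair_def sum_distrib_left by (subst sum.swap) (simp add: mult.left_commute)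

lemma pair_ext: "(\<And>g. pair g u = pair g v) \<Longrightarrow> u = v"
  by (metis pair_bvec_left ext)

lemma lin_map_sharp: "lin_map (sharp r)"
  by (simp add: lin_map_def sharp_def vadd_def vsmul_def sum.distrib sum_distrib_left
      algebra_simps fun_eq_iff)

lemma sharp_add: "sharp r (a + b) = sharp r a + sharp r b"
  by (rule lin_map_add[OF lin_map_sharp])

lemma sharp_diff: "sharp r (a - b) = sharp r a - sharp r b"
  by (rule lin_map_diff[OF lin_map_sharp])

lemma sharp_bvec: "sym2 r \<Longrightarrow> sharp r (bvec q) = (\<lambda>i. r i q)"
  by (simp add: sharp_def sym2_def delta_simps fun_eq_iff)

lemma pair_sharp_commute: "sym2 r \<Longrightarrow> pair g (sharp r d) = pair d (sharp r g)"
  unfolding pair_def sharp_def sym2_def sum_distrib_left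
  by (subst sum.swap) (simp add: mult.left_commute mult.commute)

lemma contract_sharp_apply:
  "lin_map f \<Longrightarrow> (\<Sum>s\<in>UNIV. g s * f (sharp r (bvec s)) i) = f (sharp r g) i"
  using lin_map_sum[of f UNIV g "\<lambda>s. sharp r (bvec s)"]
    lin_map_expansion[OF lin_map_sharp, of r g, symmetric]
  by (simp add: fun_eq_iff)

lemma contract_sharp_pair:
  "lin_map f \<Longrightarrow> (\<Sum>s\<in>UNIV. g s * pair v (f (sharp r (bvec s)))) = pair v (f (sharp r g))"
  by (simp add: pair_sum_right[symmetric] contract_sharp_apply)

lemma Lstar_apply: "Lstar m x \<alpha> j = - pair \<alpha> (m x (bvec j))"
  by (simp add: Lstar_def)

lemma Lstar_add_right: "Lstar m x (a + b) = Lstar m x a + Lstar m x b"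
  by (simp add: Lstar_def pair_def algebra_simps sum.distrib fun_eq_iff)

lemma Lstar_diff_right: "Lstar m x (a - b) = Lstar m x a - Lstar m x b"
  by (simp add: Lstar_def pair_diff_left fun_eq_iff)

lemma Lstar_smul_right: "Lstar m x (vsmul c a) = vsmul c (Lstar m x a)"
  by (simp add: Lstar_def pair_def vsmul_def sum_distrib_left algebra_simps fun_eq_iff)

locale bilinear_product =
  fixes m :: "('n::finite \<Rightarrow> 'k::field) \<Rightarrow> ('n \<Rightarrow> 'k) \<Rightarrow> ('n \<Rightarrow> 'k)"
  assumes bilinear: "bilin_map m"
begin

lemma lin_map_left: "lin_map (\<lambda>x. m x y)"
  using bilinear by (simp add: bilin_map_def)

lemma lin_map_right: "lin_map (m x)"
  using bilinear by (simp add: bilin_map_def)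

lemma add_left: "m (x + y) z = m x z + m y z"
  using lin_map_add[OF lin_map_left] .

lemma add_right: "m z (x + y) = m z x + m z y"
  using lin_map_add[OF lin_map_right] .

lemma diff_left: "m (x - y) z = m x z - m y z"
  using lin_map_diff[OF lin_map_left] .

lemma diff_right: "m z (x - y) = m z x - m z y"
  using lin_map_diff[OF lin_map_right] .

lemma smul_left: "m (vsmul c x) z = vsmul c (m x z)"
  using lin_map_smul[OF lin_map_left] .

lemma smul_right: "m z (vsmul c x) = vsmul c (m z x)"
  using lin_map_smul[OF lin_map_right] .

lemma comm_eq: "comm m x y = m x y - m y x"
  by (simp add: comm_def vsub_eq_minus)

lemma comm_antisym: "comm m x y = - comm m y x"
  by (simp add: comm_eq)

lemma comm_add_left: "comm m (x + y) z = comm m x z + comm m y z"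
  by (simp add: comm_eq add_left add_right)

lemma comm_add_right: "comm m z (x + y) = comm m z x + comm m z y"
  by (simp add: comm_eq add_left add_right)

lemma comm_smul_left: "comm m (vsmul c x) z = vsmul c (comm m x z)"
  unfolding comm_eq smul_left smul_right by (simp add: vsmul_def fun_eq_iff algebra_simps)

lemma comm_smul_right: "comm m z (vsmul c x) = vsmul c (comm m z x)"
  unfolding comm_eq smul_left smul_right by (simp add: vsmul_def fun_eq_iff algebra_simps)

lemma lin_map_comm_left: "lin_map (\<lambda>x. comm m x z)"
  by (simp add: lin_map_def vadd_eq_plus comm_add_left comm_smul_left)

lemma lin_map_comm_right: "lin_map (comm m z)"
  by (simp add: lin_map_def vadd_eq_plus comm_add_right comm_smul_right)

lemma Lstar_add_left: "Lstar m (x + y) a = Lstar m x a + Lstar m y a"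
  by (simp add: Lstar_def add_left pair_def algebra_simps sum.distrib fun_eq_iff)

lemma Lstar_smul_left: "Lstar m (vsmul c x) a = vsmul c (Lstar m x a)"
  unfolding Lstar_def smul_left
  by (simp add: pair_def vsmul_def sum_distrib_left algebra_simps fun_eq_iff)

lemma pair_Lstar: "pair (Lstar m x a) y = - pair a (m x y)"
proof -
  have "pair a (m x y) = pair a (\<lambda>i. \<Sum>j\<in>UNIV. y j * m x (bvec j) i)"
    using lin_map_expansion[OF lin_map_right] by metis
  then show ?thesis
    by (simp add: pair_sum_right Lstar_def pair_def[of _ y] sum_negf mult.commute)
qed

text \<open>Coordinates of [r,r]: its three summands are the products of the columns
  (\<lambda>i. r i q) of r, which by symmetry are the vectors r\<sharp>(e_q).\<close>

lemma smul_bvec_apply: "m (vsmul c (bvec i)) (vsmul d (bvec k)) p = c * (d * m (bvec i) (bvec k) p)"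
  by (simp only: smul_left smul_right) (simp add: vsmul_def)

lemma rr_first_sum:
  fixes r :: "'n \<Rightarrow> 'n \<Rightarrow> 'k"
  shows "(\<Sum>i\<in>UNIV. \<Sum>j\<in>UNIV. \<Sum>k\<in>UNIV. \<Sum>l\<in>UNIV.
      m (vsmul (r i j) (bvec i)) (vsmul (r k l) (bvec k)) p * bvec j q * bvec l s)
   = m (\<lambda>i. r i q) (\<lambda>i. r i s) p"
proof -
  have "m (\<lambda>i. r i q) (\<lambda>i. r i s) p = (\<Sum>i\<in>UNIV. \<Sum>k\<in>UNIV. r i q * r k s * m (bvec i) (bvec k) p)"
    by (rule bilinear_expansion[OF lin_map_left lin_map_right])
  then show ?thesis
    by (simp add: smul_bvec_apply delta_simps algebra_simps)
qed

lemma rr_second_sum: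
  fixes r :: "'n \<Rightarrow> 'n \<Rightarrow> 'k"
  assumes "sym2 r"
  shows "(\<Sum>i\<in>UNIV. \<Sum>j\<in>UNIV. \<Sum>k\<in>UNIV. \<Sum>l\<in>UNIV.
      vsmul (r i j) (bvec i) p * m (bvec j) (vsmul (r k l) (bvec k)) q * bvec l s)
   = m (\<lambda>i. r i p) (\<lambda>i. r i s) q"
proof -
  have "m (\<lambda>i. r i p) (\<lambda>i. r i s) q = (\<Sum>i\<in>UNIV. \<Sum>k\<in>UNIV. r i p * r k s * m (bvec i) (bvec k) q)"
    by (rule bilinear_expansion[OF lin_map_left lin_map_right])
  moreover have "r p j = r j p" for j
    using assms by (simp add: sym2_def)
  moreover have "m (bvec j) (vsmul c (bvec k)) q = c * m (bvec j) (bvec k) q" for j c k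
    by (simp only: smul_right) (simp add: vsmul_def)
  ultimately show ?thesis
    by (simp add: vsmul_def delta_simps algebra_simps)
qed

lemma rr_third_sum:
  fixes r :: "'n \<Rightarrow> 'n \<Rightarrow> 'k"
  assumes "sym2 r"
  shows "(\<Sum>i\<in>UNIV. \<Sum>j\<in>UNIV. \<Sum>k\<in>UNIV. \<Sum>l\<in>UNIV.
      vsmul (r i j) (bvec i) p * vsmul (r k l) (bvec k) q * comm m (bvec j) (bvec l) s)
   = comm m (\<lambda>i. r i p) (\<lambda>i. r i q) s"
proof -
  have "comm m (\<lambda>i. r i p) (\<lambda>i. r i q) s
      = (\<Sum>i\<in>UNIV. \<Sum>k\<in>UNIV. r i p * r k q * comm m (bvec i) (bvec k) s)"
    by (rule bilinear_expansion[OF lin_map_comm_left lin_map_comm_right])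
  moreover have "r p j = r j p" "r q j = r j q" for j
    using assms by (simp_all add: sym2_def)
  ultimately show ?thesis
    by (simp add: vsmul_def delta_simps algebra_simps)
qed

lemma rr_eq_sharp:
  assumes "sym2 r"
  shows "rr m r p q s = - m (sharp r (bvec q)) (sharp r (bvec s)) p
    + m (sharp r (bvec p)) (sharp r (bvec s)) q + comm m (sharp r (bvec p)) (sharp r (bvec q)) s"
  unfolding rr_def rr_first_sum rr_second_sum[OF assms] rr_third_sum[OF assms] sharp_bvec[OF assms] ..

lemma pair_rr:
  assumes "sym2 r"
  shows "(\<Sum>p\<in>UNIV. \<alpha> p * (\<Sum>q\<in>UNIV. \<beta> q * (\<Sum>s\<in>UNIV. \<gamma> s * rr m r p q s)))
    = - pair \<alpha> (m (sharp r \<beta>) (sharp r \<gamma>)) + pair \<beta> (m (sharp r \<alpha>) (sharp r \<gamma>))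
      + pair \<gamma> (comm m (sharp r \<alpha>) (sharp r \<beta>))"
proof -
  define e where "e q = sharp r (bvec q)" for q
  define a where "a = sharp r \<alpha>"
  define b where "b = sharp r \<beta>"
  define c where "c = sharp r \<gamma>"
  have contract_left: "(\<Sum>s\<in>UNIV. g s * m (e s) u i) = m (sharp r g) u i" for g u i
    unfolding e_def by (rule contract_sharp_apply[OF lin_map_left])
  have contract_right: "(\<Sum>s\<in>UNIV. g s * m u (e s) i) = m u (sharp r g) i" for g u i
    unfolding e_def by (rule contract_sharp_apply[OF lin_map_right])
  have contract_pair_left: "(\<Sum>s\<in>UNIV. g s * pair v (m (e s) u)) = pair v (m (sharp r g) u)"
    for g u v
    unfolding e_def by (rule contract_sharp_pair[OF lin_map_left])
  have contract_pair_comm_left: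
    "(\<Sum>s\<in>UNIV. g s * pair v (comm m (e s) u)) = pair v (comm m (sharp r g) u)" for g u v
    unfolding e_def by (rule contract_sharp_pair[OF lin_map_comm_left])
  have contract_pair_comm_right:
    "(\<Sum>s\<in>UNIV. g s * pair v (comm m u (e s))) = pair v (comm m u (sharp r g))" for g u v
    unfolding e_def by (rule contract_sharp_pair[OF lin_map_comm_right])
  have inner: "(\<Sum>s\<in>UNIV. \<gamma> s * rr m r p q s)
      = - m (e q) c p + m (e p) c q + pair \<gamma> (comm m (e p) (e q))" for p q
    by (simp add: rr_eq_sharp[OF assms] e_def[symmetric] c_def distrib_left right_diff_distrib
        sum.distrib sum_subtractf sum_negf contract_right pair_def)
  have middle: "(\<Sum>q\<in>UNIV. \<beta> q * (\<Sum>s\<in>UNIV. \<gamma> s * rr m r p q s))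
      = - m b c p + pair \<beta> (m (e p) c) + pair \<gamma> (comm m (e p) b)" for p
    by (simp add: inner b_def distrib_left right_diff_distrib sum.distrib sum_subtractf sum_negf
        contract_left contract_pair_comm_right pair_def[of \<beta>])
  show ?thesis
    by (simp add: middle a_def b_def c_def distrib_left right_diff_distrib sum.distrib
        sum_subtractf sum_negf contract_pair_left contract_pair_comm_left pair_def[of \<alpha>])
qed

lemma sharp_r_bracket:
  assumes "s_matrix m r"
  shows "sharp r (r_bracket m r \<alpha> \<beta>) = comm m (sharp r \<alpha>) (sharp r \<beta>)"
proof (rule pair_ext)
  fix \<gamma>
  have sym: "sym2 r" and rr_zero: "\<And>p q s. rr m r p q s = 0"
    using assms by (simp_all add: s_matrix_def)
  have "pair \<gamma> (sharp r (r_bracket m r \<alpha> \<beta>)) = pair (r_bracket m r \<alpha> \<beta>) (sharp r \<gamma>)"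
    by (rule pair_sharp_commute[OF sym])
  also have "\<dots> = - pair \<beta> (m (sharp r \<alpha>) (sharp r \<gamma>)) + pair \<alpha> (m (sharp r \<beta>) (sharp r \<gamma>))"
    by (simp add: r_bracket_def vsub_eq_minus pair_diff_left pair_Lstar)
  also have "\<dots> = pair \<gamma> (comm m (sharp r \<alpha>) (sharp r \<beta>))"
    using pair_rr[OF sym, of \<alpha> \<beta> \<gamma>] by (simp add: rr_zero algebra_simps)
  finally show "pair \<gamma> (sharp r (r_bracket m r \<alpha> \<beta>)) = pair \<gamma> (comm m (sharp r \<alpha>) (sharp r \<beta>))" .
qed

end

locale pre_lie_product = bilinear_product +
  assumes pre_lie_identity: "m (m x y) z - m x (m y z) = m (m y x) z - m y (m x z)"
begin

lemma comm_jacobi: "comm m a (comm m b x) - comm m b (comm m a x) = comm m (comm m a b) x"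
proof -
  have "comm m a (comm m b x) - comm m b (comm m a x) - comm m (comm m a b) x
     = - (m (m a b) x - m a (m b x) - (m (m b a) x - m b (m a x)))
       + (m (m a x) b - m a (m x b) - (m (m x a) b - m x (m a b)))
       - (m (m b x) a - m b (m x a) - (m (m x b) a - m x (m b a)))"
    unfolding comm_eq diff_left diff_right by (simp add: algebra_simps)
  then show ?thesis by (simp add: pre_lie_identity)
qed

lemma Lstar_comm: "Lstar m (comm m x a) b = Lstar m x (Lstar m a b) - Lstar m a (Lstar m x b)"
proof
  fix j
  have pre_lie_at_bvec:
    "m (m x a) (bvec j) - m (m a x) (bvec j) = m x (m a (bvec j)) - m a (m x (bvec j))"
    using pre_lie_identity[of x a "bvec j"] by (simp add: algebra_simps)
  have "Lstar m (comm m x a) b j = - pair b (m (m x a) (bvec j) - m (m a x) (bvec j))"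
    by (simp add: Lstar_apply comm_eq diff_left)
  also have "\<dots> = - pair b (m x (m a (bvec j)) - m a (m x (bvec j)))"
    by (simp only: pre_lie_at_bvec)
  also have "\<dots> = (Lstar m x (Lstar m a b) - Lstar m a (Lstar m x b)) j"
    by (simp add: Lstar_apply pair_Lstar pair_diff_right)
  finally show "Lstar m (comm m x a) b j = (Lstar m x (Lstar m a b) - Lstar m a (Lstar m x b)) j" .
qed

context
  fixes r
  assumes s_matrix: "s_matrix m r"
begin

lemma sharp_Lstar_sharp:
  "sharp r (Lstar m (sharp r \<gamma>) \<alpha>) = comm m (sharp r \<gamma>) (sharp r \<alpha>) + sharp r (Lstar m (sharp r \<alpha>) \<gamma>)"
  using sharp_r_bracket[OF s_matrix, of \<gamma> \<alpha>]
  by (simp add: r_bracket_def vsub_eq_minus sharp_diff algebra_simps)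

lemma rho_eq: "rho m r \<alpha> x = comm m (sharp r \<alpha>) x + sharp r (Lstar m x \<alpha>)"
  by (simp add: rho_def vadd_eq_plus)

lemma lin_map_rho: "lin_map (rho m r \<alpha>)"
  by (simp add: lin_map_def vadd_eq_plus rho_eq comm_add_right Lstar_add_left sharp_add
      comm_smul_right Lstar_smul_left lin_map_smul[OF lin_map_sharp] vsmul_add_right)

lemma rho_add: "rho m r (\<alpha> + \<beta>) x = rho m r \<alpha> x + rho m r \<beta> x"
  by (simp add: rho_eq sharp_add comm_add_left Lstar_add_right)

lemma rho_smul: "rho m r (vsmul c \<alpha>) x = vsmul c (rho m r \<alpha> x)"
  by (simp add: rho_eq lin_map_smul[OF lin_map_sharp] comm_smul_left Lstar_smul_right
      vsmul_add_right)

lemma rho_r_bracket: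
  "rho m r (r_bracket m r \<alpha> \<beta>) x = rho m r \<alpha> (rho m r \<beta> x) - rho m r \<beta> (rho m r \<alpha> x)"
proof -
  define a where "a = sharp r \<alpha>"
  define b where "b = sharp r \<beta>"
  have left: "rho m r (r_bracket m r \<alpha> \<beta>) x
      = comm m (comm m a b) x + sharp r (Lstar m x (Lstar m a \<beta>)) - sharp r (Lstar m x (Lstar m b \<alpha>))"
    unfolding rho_eq sharp_r_bracket[OF s_matrix] a_def b_def
    by (simp add: r_bracket_def vsub_eq_minus Lstar_diff_right sharp_diff)
  have "rho m r \<alpha> (rho m r \<beta> x)
      = comm m a (comm m b x) + sharp r (Lstar m (comm m b x) \<alpha>) + sharp r (Lstar m a (Lstar m x \<beta>))"
    using sharp_Lstar_sharp[of "Lstar m x \<beta>" \<alpha>] comm_antisym[of "sharp r (Lstar m x \<beta>)" a]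
    by (simp add: rho_eq a_def b_def comm_add_right Lstar_add_left sharp_add)
  moreover have "rho m r \<beta> (rho m r \<alpha> x)
      = comm m b (comm m a x) + sharp r (Lstar m (comm m a x) \<beta>) + sharp r (Lstar m b (Lstar m x \<alpha>))"
    using sharp_Lstar_sharp[of "Lstar m x \<alpha>" \<beta>] comm_antisym[of "sharp r (Lstar m x \<alpha>)" b]
    by (simp add: rho_eq a_def b_def comm_add_right Lstar_add_left sharp_add)
  ultimately show ?thesis
    unfolding left using comm_jacobi[of a b x]
    by (simp add: Lstar_comm sharp_diff algebra_simps)
qed

end

end

theorem proposition4p3:
  fixes m :: "('n::finite \<Rightarrow> 'k::field_char_0) \<Rightarrow> ('n \<Rightarrow> 'k) \<Rightarrow> ('n \<Rightarrow> 'k)"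
    and r :: "'n \<Rightarrow> 'n \<Rightarrow> 'k"
  assumes "pre_lie m"
    and "s_matrix m r"
  shows "lie_rep (r_bracket m r) (rho m r)"
proof -
  interpret pre_lie_product m
    using assms(1) by unfold_locales (simp_all add: pre_lie_def vsub_eq_minus)
  show ?thesis
    unfolding lie_rep_def vadd_eq_plus vsub_eq_minus
    using lin_map_rho[OF assms(2)] rho_add[OF assms(2)] rho_smul[OF assms(2)]
      rho_r_bracket[OF assms(2)]
    by (simp add: fun_eq_iff)
qed

end
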